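(* Let $n\ge 2$ and let $\rho\colon F_n\rtimes B_n\to\mathbf{C}^*$ be a one-dimensional representation, extended linearly to a ring homomorphism $\mathbf{Z}[F_n\rtimes B_n]\to\mathbf{C}$. Let $\rho^+\colon B_n\to\mathrm{GL}(n,\mathbf{C})$ be defined by applying $\rho$ to each entry of the matrix $\phi(\beta)$. Then there exist $s,t\in\mathbf{C}^*$ with $\rho(\sigma_i)=s$ for all $i$ and $\rho(g_j)=t$ for all $j$, and for $i=1,\dots,n-1$ $$\rho^+(\sigma_i)=s\begin{bmatrix} I_{i-1}&&\\ &\begin{matrix}0&t\\1&1-t\end{matrix}&\\ &&I_{n-i-1}\end{bmatrix}.$$ That is, $\rho^+$ is the unreduced Burau representation specialized at $t$ and rescaled by the factor $s$.
   Context: The braid group $B_n$ has generators $\sigma_1,\dots,\sigma_{n-1}$ with relations $\sigma_i\sigma_j=\sigma_j\sigma_i$ for $|i-j|>1$ and $\sigma_i\sigma_j\sigma_i=\sigma_j\sigma_i\sigma_j$ for $|i-j|=1$. Let $F_n$ be the free group on $g_1,\dots,g_n$. The semidirect product $F_n\rtimes B_n$ is the group generated by $F_n$ and $B_n$ subject to the additional relations $g_{i+1}\sigma_i=\sigma_i g_i$, $g_i\sigma_i=\sigma_i g_i g_{i+1}g_i^{-1}$, and $g_j\sigma_i=\sigma_i g_j$ for $j\notin\{i,i+1\}$. Let $\mathbf{Z}[F_n\rtimes B_n]$ be its (noncommutative) group ring. For $i=1,\dots,n-1$ let $R_i=\begin{bmatrix}0&g_i\\1&1-g_i\end{bmatrix}$.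 Let $\phi$ be the homomorphism from $B_n$ to the group of invertible $n\times n$ matrices over $\mathbf{Z}[F_n\rtimes B_n]$ (usual matrix multiplication) given by $\phi(\sigma_i)=\sigma_i\cdot\mathrm{diag}(I_{i-1},R_i,I_{n-i-1})$, where the scalar $\sigma_i$ multiplies every entry on the left. *)

theory Defs
  imports "HOL-Algebra.Group" "Jordan_Normal_Form.Matrix"
begin

datatype gen = Sig nat | Gf nat

(* a letter is a generator with an exponent flag: False = x, True = x^{-1} *)
type_synonym letter = "bool \<times> gen"
type_synonym word = "letter list"

definition valid_gen :: "nat \<Rightarrow> gen \<Rightarrow> bool" where
  "valid_gen n x = (case x of Sig i \<Rightarrow> 1 \<le> i \<and> i \<le> n - 1 | Gf j \<Rightarrow> 1 \<le> j \<and> j \<le> n)"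

definition valid_word :: "nat \<Rightarrow> word \<Rightarrow> bool" where
  "valid_word n w = (\<forall>l \<in> set w. valid_gen n (snd l))"

abbreviation sg :: "nat \<Rightarrow> word" where "sg i \<equiv> [(False, Sig i)]"
abbreviation gg :: "nat \<Rightarrow> word" where "gg j \<equiv> [(False, Gf j)]"
abbreviation ggi :: "nat \<Rightarrow> word" where "ggi j \<equiv> [(True, Gf j)]"

inductive defrel :: "nat \<Rightarrow> word \<Rightarrow> word \<Rightarrow> bool" for n where
  far: "\<lbrakk>1 \<le> i; i \<le> n - 1; 1 \<le> j; j \<le> n - 1; i + 1 < j \<or> j + 1 < i\<rbrakk>
        \<Longrightarrow> defrel n (sg i @ sg j) (sg j @ sg i)"
| braid: "\<lbrakk>1 \<le> i; i \<le> n - 1; 1 \<le> j; j \<le> n - 1; i = j + 1 \<or> j = i + 1\<rbrakk>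
        \<Longrightarrow> defrel n (sg i @ sg j @ sg i) (sg j @ sg i @ sg j)"
| act1: "\<lbrakk>1 \<le> i; i \<le> n - 1\<rbrakk> \<Longrightarrow> defrel n (gg (i+1) @ sg i) (sg i @ gg i)"
| act2: "\<lbrakk>1 \<le> i; i \<le> n - 1\<rbrakk>
        \<Longrightarrow> defrel n (gg i @ sg i) (sg i @ gg i @ gg (i+1) @ ggi i)"
| act3: "\<lbrakk>1 \<le> i; i \<le> n - 1; 1 \<le> j; j \<le> n; j \<noteq> i; j \<noteq> i + 1\<rbrakk>
        \<Longrightarrow> defrel n (gg j @ sg i) (sg i @ gg j)"

inductive peq :: "nat \<Rightarrow> word \<Rightarrow> word \<Rightarrow> bool" for n where
  refl: "peq n w w"
| sym: "peq n u v \<Longrightarrow> peq n v u"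
| trans: "peq n u v \<Longrightarrow> peq n v w \<Longrightarrow> peq n u w"
| ctx: "peq n u v \<Longrightarrow> peq n (a @ u @ b) (a @ v @ b)"
| cancel: "peq n [(e, x), (\<not> e, x)] []"
| rel: "defrel n u v \<Longrightarrow> peq n u v"

definition wclass :: "nat \<Rightarrow> word \<Rightarrow> word set" where
  "wclass n w = {v. valid_word n v \<and> peq n v w}"

definition FB :: "nat \<Rightarrow> word set monoid" where
  "FB n = \<lparr> carrier = {wclass n w | w. valid_word n w},
            mult = (\<lambda>X Y. wclass n ((SOME x. x \<in> X) @ (SOME y. y \<in> Y))),
            one = wclass n [] \<rparr>"

definition sigma :: "nat \<Rightarrow> nat \<Rightarrow> word set" where "sigma n i = wclass n (sg i)"
definition gel :: "nat \<Rightarrow> nat \<Rightarrow> word set" where "gel n j = wclass n (gg j)"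

definition Cstar :: "complex monoid" where
  "Cstar = \<lparr> carrier = UNIV - {0}, mult = (*), one = 1 \<rparr>"

section \<open>Group ring Z[G]: finitely supported functions carrier G \<Rightarrow> int\<close>

definition gr_basis :: "('a, 'b) monoid_scheme \<Rightarrow> 'a \<Rightarrow> ('a \<Rightarrow> int)" where
  "gr_basis G x = (\<lambda>y. if y = x then 1 else 0)"

definition gr_one :: "('a, 'b) monoid_scheme \<Rightarrow> ('a \<Rightarrow> int)" where
  "gr_one G = gr_basis G \<one>\<^bsub>G\<^esub>"

definition gr_mult :: "('a, 'b) monoid_scheme \<Rightarrow> ('a \<Rightarrow> int) \<Rightarrow> ('a \<Rightarrow> int) \<Rightarrow> ('a \<Rightarrow> int)" where
  "gr_mult G f h = (\<lambda>z. \<Sum>x \<in> {x \<in> carrier G. f x \<noteq> 0}. f x * h (inv\<^bsub>G\<^esub> x \<otimes>\<^bsub>G\<^esub> z))"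

definition rho_lin :: "('a, 'b) monoid_scheme \<Rightarrow> ('a \<Rightarrow> complex) \<Rightarrow> ('a \<Rightarrow> int) \<Rightarrow> complex" where
  "rho_lin G \<rho> f = (\<Sum>x \<in> {x \<in> carrier G. f x \<noteq> 0}. of_int (f x) * \<rho> x)"

(* R_i = [[0, g_i], [1, 1 - g_i]] placed in rows/columns i, i+1 (1-based), i.e. i-1, i (0-based);
   identity elsewhere *)
definition diagR :: "nat \<Rightarrow> nat \<Rightarrow> (word set \<Rightarrow> int) mat" where
  "diagR n i = mat n n (\<lambda>(a, b).
     if a = i - 1 \<and> b = i - 1 then (\<lambda>_. 0)
     else if a = i - 1 \<and> b = i then gr_basis (FB n) (gel n i)
     else if a = i \<and> b = i - 1 then gr_one (FB n)
     else if a = i \<and> b = i then (\<lambda>y. gr_one (FB n) y - gr_basis (FB n) (gel n i) y)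
     else if a = b then gr_one (FB n) else (\<lambda>_. 0))"

definition phi_sigma :: "nat \<Rightarrow> nat \<Rightarrow> (word set \<Rightarrow> int) mat" where
  "phi_sigma n i = map_mat (gr_mult (FB n) (gr_basis (FB n) (sigma n i))) (diagR n i)"

definition rho_plus_sigma :: "nat \<Rightarrow> (word set \<Rightarrow> complex) \<Rightarrow> nat \<Rightarrow> complex mat" where
  "rho_plus_sigma n \<rho> i = map_mat (rho_lin (FB n) \<rho>) (phi_sigma n i)"

definition burau :: "nat \<Rightarrow> complex \<Rightarrow> nat \<Rightarrow> complex mat" where
  "burau n t i = mat n n (\<lambda>(a, b).
     if a = i - 1 \<and> b = i - 1 then 0
     else if a = i - 1 \<and> b = i then t
     else if a = i \<and> b = i - 1 then 1
     else if a = i \<and> b = i then 1 - t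
     else if a = b then 1 else 0)"

end

theory Submission
  imports Defs
begin

text \<open>Since \<open>\<complex>\<^sup>*\<close> is abelian and \<open>\<rho>\<close> takes no zero values, the braid relation
  \<open>\<sigma>\<^sub>i\<sigma>\<^sub>i\<^sub>+\<^sub>1\<sigma>\<^sub>i = \<sigma>\<^sub>i\<^sub>+\<^sub>1\<sigma>\<^sub>i\<sigma>\<^sub>i\<^sub>+\<^sub>1\<close> forces \<open>\<rho>(\<sigma>\<^sub>i) = \<rho>(\<sigma>\<^sub>i\<^sub>+\<^sub>1)\<close>, and the relation
  \<open>g\<^sub>i\<^sub>+\<^sub>1\<sigma>\<^sub>i = \<sigma>\<^sub>ig\<^sub>i\<close> forces \<open>\<rho>(g\<^sub>i\<^sub>+\<^sub>1) = \<rho>(g\<^sub>i)\<close>. Left multiplication by the group element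
  \<open>\<sigma>\<^sub>i\<close> in \<open>\<int>[G]\<close> is a translation, so after applying the linear extension of \<open>\<rho>\<close> it becomes
  multiplication by \<open>s = \<rho>(\<sigma>\<^sub>i)\<close>; the entries \<open>0, g\<^sub>i, 1, 1 - g\<^sub>i\<close> of \<open>R\<^sub>i\<close> become
  \<open>0, t, 1, 1 - t\<close>.\<close>

lemma peq_append: "peq n u u' \<Longrightarrow> peq n v v' \<Longrightarrow> peq n (u @ v) (u' @ v')"
  using peq.ctx[of n u u' "[]" v] peq.ctx[of n v v' u' "[]"] by (auto intro: peq.trans)

lemma valid_word_append [simp]: "valid_word n (u @ v) \<longleftrightarrow> valid_word n u \<and> valid_word n v"
  by (auto simp: valid_word_def)

lemma valid_word_Cons [simp]: "valid_word n (l # w) \<longleftrightarrow> valid_gen n (snd l) \<and> valid_word n w"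
  by (auto simp: valid_word_def)

lemma valid_word_Nil [simp]: "valid_word n []"
  by (simp add: valid_word_def)

lemma wclass_eq_if_peq: "peq n u v \<Longrightarrow> wclass n u = wclass n v"
  unfolding wclass_def by (auto intro: peq.trans peq.sym)

lemma mem_wclass: "valid_word n w \<Longrightarrow> w \<in> wclass n w"
  unfolding wclass_def by (auto intro: peq.refl)

lemma mult_wclass:
  assumes "valid_word n u" "valid_word n v"
  shows "wclass n u \<otimes>\<^bsub>FB n\<^esub> wclass n v = wclass n (u @ v)"
proof -
  have "(SOME x. x \<in> wclass n w) \<in> wclass n w" if "valid_word n w" for w
    using mem_wclass[OF that] by (rule someI)
  then have "peq n (SOME x. x \<in> wclass n u) u" "peq n (SOME x. x \<in> wclass n v) v"
    using assms by (auto simp: wclass_def)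
  then show ?thesis
    by (auto simp: FB_def intro!: wclass_eq_if_peq peq_append)
qed

lemma carrier_FB_iff: "X \<in> carrier (FB n) \<longleftrightarrow> (\<exists>w. valid_word n w \<and> X = wclass n w)"
  by (auto simp: FB_def)

lemma one_FB: "\<one>\<^bsub>FB n\<^esub> = wclass n []"
  by (simp add: FB_def)

definition winv :: "word \<Rightarrow> word" where
  "winv w = rev (map (\<lambda>(e, x). (\<not> e, x)) w)"

lemma valid_word_winv: "valid_word n w \<Longrightarrow> valid_word n (winv w)"
  by (auto simp: valid_word_def winv_def)

lemma winv_winv [simp]: "winv (winv w) = w"
  by (induction w) (auto simp: winv_def)

lemma peq_append_winv: "peq n (w @ winv w) []"
proof (induction w)
  case Nil
  then show ?case by (simp add: winv_def peq.refl)
next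
  case (Cons l w)
  obtain e x where l: "l = (e, x)" by (cases l)
  have split: "(l # w) @ winv (l # w) = [l] @ (w @ winv w) @ [(\<not> e, x)]"
    by (simp add: winv_def l)
  have "peq n ([l] @ (w @ winv w) @ [(\<not> e, x)]) ([l] @ [] @ [(\<not> e, x)])"
    by (rule peq.ctx[OF Cons.IH])
  moreover have "peq n ([l] @ [] @ [(\<not> e, x)]) []"
    using peq.cancel[of n e x] by (simp add: l)
  ultimately show ?case unfolding split by (rule peq.trans)
qed

lemma group_FB: "group (FB n)"
proof (rule groupI)
  show "\<one>\<^bsub>FB n\<^esub> \<in> carrier (FB n)"
    unfolding one_FB carrier_FB_iff by (intro exI[of _ "[]"]) simp
next
  fix x y assume "x \<in> carrier (FB n)" "y \<in> carrier (FB n)"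
  then show "x \<otimes>\<^bsub>FB n\<^esub> y \<in> carrier (FB n)"
    unfolding carrier_FB_iff by (metis mult_wclass valid_word_append)
next
  fix x y z assume "x \<in> carrier (FB n)" "y \<in> carrier (FB n)" "z \<in> carrier (FB n)"
  then show "x \<otimes>\<^bsub>FB n\<^esub> y \<otimes>\<^bsub>FB n\<^esub> z = x \<otimes>\<^bsub>FB n\<^esub> (y \<otimes>\<^bsub>FB n\<^esub> z)"
    unfolding carrier_FB_iff by (auto simp: mult_wclass)
next
  fix x assume "x \<in> carrier (FB n)"
  then show "\<one>\<^bsub>FB n\<^esub> \<otimes>\<^bsub>FB n\<^esub> x = x"
    unfolding carrier_FB_iff one_FB by (auto simp: mult_wclass)
next
  fix x assume "x \<in> carrier (FB n)"
  then obtain w where w: "valid_word n w" "x = wclass n w"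
    unfolding carrier_FB_iff by auto
  then have "wclass n (winv w) \<otimes>\<^bsub>FB n\<^esub> x = \<one>\<^bsub>FB n\<^esub>"
    using valid_word_winv peq_append_winv[of n "winv w"]
    by (simp add: mult_wclass wclass_eq_if_peq one_FB)
  moreover have "wclass n (winv w) \<in> carrier (FB n)"
    using valid_word_winv[OF w(1)] carrier_FB_iff by auto
  ultimately show "\<exists>y\<in>carrier (FB n). y \<otimes>\<^bsub>FB n\<^esub> x = \<one>\<^bsub>FB n\<^esub>" by blast
qed

lemma group_Cstar: "group Cstar"
proof (rule groupI)
  fix x assume "x \<in> carrier Cstar"
  then show "\<exists>y\<in>carrier Cstar. y \<otimes>\<^bsub>Cstar\<^esub> x = \<one>\<^bsub>Cstar\<^esub>"
    by (intro bexI[of _ "inverse x"]) (auto simp: Cstar_def)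
qed (auto simp: Cstar_def)

lemma hom_Cstar_nonzero: "\<rho> \<in> hom G Cstar \<Longrightarrow> x \<in> carrier G \<Longrightarrow> \<rho> x \<noteq> 0"
  using hom_in_carrier by (fastforce simp: Cstar_def)

lemma hom_Cstar_mult:
  "\<rho> \<in> hom G Cstar \<Longrightarrow> x \<in> carrier G \<Longrightarrow> y \<in> carrier G \<Longrightarrow> \<rho> (x \<otimes>\<^bsub>G\<^esub> y) = \<rho> x * \<rho> y"
  by (simp add: hom_mult Cstar_def)

lemma hom_Cstar_one: "group G \<Longrightarrow> \<rho> \<in> hom G Cstar \<Longrightarrow> \<rho> \<one>\<^bsub>G\<^esub> = 1"
  using group_hom.hom_one[of G Cstar \<rho>] group_Cstar
  by (simp add: group_hom_def group_hom_axioms_def Cstar_def)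

lemma hom_wclass_append:
  assumes "\<rho> \<in> hom (FB n) Cstar" "valid_word n u" "valid_word n v"
  shows "\<rho> (wclass n (u @ v)) = \<rho> (wclass n u) * \<rho> (wclass n v)"
  using assms hom_Cstar_mult[of \<rho> "FB n"] by (metis mult_wclass carrier_FB_iff)

lemma valid_word_sg: "1 \<le> i \<Longrightarrow> i \<le> n - 1 \<Longrightarrow> valid_word n (sg i)"
  by (simp add: valid_gen_def)

lemma valid_word_gg: "1 \<le> j \<Longrightarrow> j \<le> n \<Longrightarrow> valid_word n (gg j)"
  by (simp add: valid_gen_def)

lemma sigma_in_carrier: "1 \<le> i \<Longrightarrow> i \<le> n - 1 \<Longrightarrow> sigma n i \<in> carrier (FB n)"
  unfolding sigma_def carrier_FB_iff using valid_word_sg by blast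

lemma gel_in_carrier: "1 \<le> j \<Longrightarrow> j \<le> n \<Longrightarrow> gel n j \<in> carrier (FB n)"
  unfolding gel_def carrier_FB_iff using valid_word_gg by blast

lemma braid_commutative_imp_eq:
  fixes a b :: "'a :: idom"
  assumes "a \<noteq> 0" "b \<noteq> 0" "a * b * a = b * a * b"
  shows "a = b"
proof -
  have "a * b * (a - b) = 0"
    using assms(3) by (simp add: algebra_simps)
  then show ?thesis using assms(1,2) by simp
qed

lemma hom_sigma_Suc:
  assumes \<rho>: "\<rho> \<in> hom (FB n) Cstar" and i: "1 \<le> i" "Suc i \<le> n - 1"
  shows "\<rho> (sigma n (Suc i)) = \<rho> (sigma n i)"
proof -
  let ?a = "\<rho> (sigma n i)" and ?b = "\<rho> (sigma n (Suc i))"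
  have va: "valid_word n (sg i)" and vb: "valid_word n (sg (Suc i))"
    using i by (auto simp: valid_gen_def)
  have word3: "\<rho> (wclass n (u @ v @ w)) = \<rho> (wclass n u) * \<rho> (wclass n v) * \<rho> (wclass n w)"
    if "valid_word n u" "valid_word n v" "valid_word n w" for u v w
    using that by (simp add: hom_wclass_append[OF \<rho>] mult.assoc)
  have "defrel n (sg i @ sg (Suc i) @ sg i) (sg (Suc i) @ sg i @ sg (Suc i))"
    using i by (intro defrel.braid) auto
  then have "\<rho> (wclass n (sg i @ sg (Suc i) @ sg i)) = \<rho> (wclass n (sg (Suc i) @ sg i @ sg (Suc i)))"
    by (rule arg_cong[OF wclass_eq_if_peq[OF peq.rel]])
  then have "?a * ?b * ?a = ?b * ?a * ?b"
    unfolding word3[OF va vb va] word3[OF vb va vb] sigma_def .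
  moreover have "?a \<noteq> 0" "?b \<noteq> 0"
    using i by (auto intro!: hom_Cstar_nonzero[OF \<rho>] sigma_in_carrier)
  ultimately show ?thesis
    using braid_commutative_imp_eq by metis
qed

lemma hom_gel_Suc:
  assumes \<rho>: "\<rho> \<in> hom (FB n) Cstar" and j: "1 \<le> j" "Suc j \<le> n"
  shows "\<rho> (gel n (Suc j)) = \<rho> (gel n j)"
proof -
  have "defrel n (gg (Suc j) @ sg j) (sg j @ gg j)"
    using j defrel.act1[of j n] by simp
  then have "\<rho> (wclass n (gg (Suc j) @ sg j)) = \<rho> (wclass n (sg j @ gg j))"
    by (rule arg_cong[OF wclass_eq_if_peq[OF peq.rel]])
  moreover have "valid_word n (sg j)" "valid_word n (gg j)" "valid_word n (gg (Suc j))"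
    using j by (auto simp: valid_gen_def)
  ultimately have "\<rho> (gel n (Suc j)) * \<rho> (sigma n j) = \<rho> (sigma n j) * \<rho> (gel n j)"
    unfolding sigma_def gel_def by (simp only: hom_wclass_append[OF \<rho>])
  moreover have "\<rho> (sigma n j) \<noteq> 0"
    using j by (auto intro!: hom_Cstar_nonzero[OF \<rho>] sigma_in_carrier)
  ultimately show ?thesis by (simp add: mult.commute)
qed

lemma eq_first_if_Suc_eq:
  assumes "\<And>i. 1 \<le> i \<Longrightarrow> Suc i \<le> m \<Longrightarrow> f (Suc i) = f i" and "1 \<le> j" "j \<le> m"
  shows "f j = f 1"
  using assms(2,3)
proof (induction j rule: dec_induct)
  case (step i)
  then show ?case using assms(1) by simp
qed simp

lemma gr_mult_basis:
  assumes "a \<in> carrier G"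
  shows "gr_mult G (gr_basis G a) h = (\<lambda>z. h (inv\<^bsub>G\<^esub> a \<otimes>\<^bsub>G\<^esub> z))"
proof -
  have "{x \<in> carrier G. gr_basis G a x \<noteq> 0} = {a}"
    using assms by (auto simp: gr_basis_def)
  then show ?thesis unfolding gr_mult_def by (simp add: gr_basis_def)
qed

lemma rho_lin_translate:
  fixes G (structure)
  assumes G: "group G" and a: "a \<in> carrier G"
    and S: "finite S" "S \<subseteq> carrier G" and h: "\<forall>y \<in> carrier G - S. h y = 0"
  shows "rho_lin G \<rho> (\<lambda>z. h (inv a \<otimes> z)) = (\<Sum>y\<in>S. of_int (h y) * \<rho> (a \<otimes> y))"
proof -
  interpret group G by (rule G)
  let ?T = "{y \<in> carrier G. h y \<noteq> 0}"
  have supp: "{z \<in> carrier G. h (inv a \<otimes> z) \<noteq> 0} = (\<lambda>y. a \<otimes> y) ` ?T"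
  proof (intro equalityI subsetI)
    fix z assume z: "z \<in> {z \<in> carrier G. h (inv a \<otimes> z) \<noteq> 0}"
    then have "z = a \<otimes> (inv a \<otimes> z)" using a by (simp add: m_assoc[symmetric])
    then show "z \<in> (\<lambda>y. a \<otimes> y) ` ?T" using z a by blast
  qed (use a in \<open>auto simp: m_assoc[symmetric]\<close>)
  have inj: "inj_on (\<lambda>y. a \<otimes> y) ?T"
    using a by (auto intro!: inj_onI)
  have "rho_lin G \<rho> (\<lambda>z. h (inv a \<otimes> z)) = (\<Sum>y\<in>?T. of_int (h y) * \<rho> (a \<otimes> y))"
    unfolding rho_lin_def supp sum.reindex[OF inj]
    using a by (intro sum.cong) (auto simp: m_assoc[symmetric])
  also have "\<dots> = (\<Sum>y\<in>S. of_int (h y) * \<rho> (a \<otimes> y))"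
    using S h by (intro sum.mono_neutral_left) auto
  finally show ?thesis .
qed

lemma rho_lin_basis_mult:
  fixes G (structure)
  assumes G: "group G" and \<rho>: "\<rho> \<in> hom G Cstar" and a: "a \<in> carrier G" and g: "g \<in> carrier G"
  shows "rho_lin G \<rho> (gr_mult G (gr_basis G a) (\<lambda>_. 0)) = 0"
    and "rho_lin G \<rho> (gr_mult G (gr_basis G a) (gr_basis G g)) = \<rho> a * \<rho> g"
    and "rho_lin G \<rho> (gr_mult G (gr_basis G a) (gr_one G)) = \<rho> a"
    and "rho_lin G \<rho> (gr_mult G (gr_basis G a) (\<lambda>y. gr_one G y - gr_basis G g y))
           = \<rho> a * (1 - \<rho> g)"
proof -
  interpret group G by (rule G)
  have translate: "rho_lin G \<rho> (gr_mult G (gr_basis G a) h) = (\<Sum>y\<in>S. of_int (h y) * \<rho> (a \<otimes> y))"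
    if "finite S" "S \<subseteq> carrier G" "\<forall>y \<in> carrier G - S. h y = 0" for h S
    unfolding gr_mult_basis[OF a] by (rule rho_lin_translate[OF G a that])
  have mult: "\<rho> (a \<otimes> g) = \<rho> a * \<rho> g"
    using hom_Cstar_mult[OF \<rho> a g] .
  have one: "\<rho> \<one> = 1"
    using hom_Cstar_one[OF G \<rho>] .
  show "rho_lin G \<rho> (gr_mult G (gr_basis G a) (\<lambda>_. 0)) = 0"
    using translate[of "{}"] by simp
  show "rho_lin G \<rho> (gr_mult G (gr_basis G a) (gr_basis G g)) = \<rho> a * \<rho> g"
    using translate[of "{g}"] g mult by (simp add: gr_basis_def)
  show "rho_lin G \<rho> (gr_mult G (gr_basis G a) (gr_one G)) = \<rho> a"
    using translate[of "{\<one>}"] a by (simp add: gr_basis_def gr_one_def)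
  show "rho_lin G \<rho> (gr_mult G (gr_basis G a) (\<lambda>y. gr_one G y - gr_basis G g y)) = \<rho> a * (1 - \<rho> g)"
  proof (cases "g = \<one>")
    case True
    then show ?thesis
      using translate[of "{\<one>}"] one by (simp add: gr_basis_def gr_one_def)
  next
    case False
    then show ?thesis
      using translate[of "{\<one>, g}"] a g mult by (simp add: gr_basis_def gr_one_def algebra_simps)
  qed
qed

lemma rho_plus_sigma_eq_smult_burau:
  assumes \<rho>: "\<rho> \<in> hom (FB n) Cstar" and i: "1 \<le> i" "i \<le> n - 1"
    and s: "\<rho> (sigma n i) = s" and t: "\<rho> (gel n i) = t"
  shows "rho_plus_sigma n \<rho> i = s \<cdot>\<^sub>m burau n t i"
proof (rule eq_matI)
  let ?f = "\<lambda>x. rho_lin (FB n) \<rho> (gr_mult (FB n) (gr_basis (FB n) (sigma n i)) x)"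
  fix r c assume "r < dim_row (s \<cdot>\<^sub>m burau n t i)" "c < dim_col (s \<cdot>\<^sub>m burau n t i)"
  then have rc: "r < n" "c < n" by (auto simp: burau_def)
  have "i \<le> n" using i by simp
  note entries = rho_lin_basis_mult[OF group_FB \<rho> sigma_in_carrier[OF i] gel_in_carrier[OF i(1) this],
      unfolded s t]
  have "rho_plus_sigma n \<rho> i $$ (r, c) = ?f (diagR n i $$ (r, c))"
    using rc by (simp add: rho_plus_sigma_def phi_sigma_def diagR_def)
  then show "rho_plus_sigma n \<rho> i $$ (r, c) = (s \<cdot>\<^sub>m burau n t i) $$ (r, c)"
    using rc entries unfolding diagR_def burau_def by auto
qed (auto simp: rho_plus_sigma_def phi_sigma_def diagR_def burau_def)

theorem proposition2p1:
  fixes n :: nat and \<rho> :: "word set \<Rightarrow> complex"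
  assumes "n \<ge> 2"
    and "\<rho> \<in> hom (FB n) Cstar"
  shows "\<exists>s t. s \<noteq> 0 \<and> t \<noteq> 0 \<and>
           (\<forall>i \<in> {1..n-1}. \<rho> (sigma n i) = s) \<and>
           (\<forall>j \<in> {1..n}. \<rho> (gel n j) = t) \<and>
           (\<forall>i \<in> {1..n-1}. rho_plus_sigma n \<rho> i = s \<cdot>\<^sub>m burau n t i)"
proof -
  let ?s = "\<rho> (sigma n 1)" and ?t = "\<rho> (gel n 1)"
  have s: "\<rho> (sigma n i) = ?s" if "i \<in> {1..n-1}" for i
    using that by (intro eq_first_if_Suc_eq[where f = "\<lambda>i. \<rho> (sigma n i)"]
        hom_sigma_Suc[OF assms(2)]) auto
  have t: "\<rho> (gel n j) = ?t" if "j \<in> {1..n}" for j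
    using that by (intro eq_first_if_Suc_eq[where f = "\<lambda>j. \<rho> (gel n j)"]
        hom_gel_Suc[OF assms(2)]) auto
  have "?s \<noteq> 0" "?t \<noteq> 0"
    using assms(1) by (auto intro!: hom_Cstar_nonzero[OF assms(2)] sigma_in_carrier gel_in_carrier)
  moreover have "rho_plus_sigma n \<rho> i = ?s \<cdot>\<^sub>m burau n ?t i" if "i \<in> {1..n-1}" for i
    using that by (intro rho_plus_sigma_eq_smult_burau[OF assms(2)] s t) auto
  ultimately show ?thesis
    using s t by blast
qed

end
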